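(* Fix constants $\alpha>0$, $\beta>0$ and $\gamma_P>2$. Let $f(n):=n^{2/3}\ln^{1/3}n$, $s:=\min\{\lceil\alpha f(n)\rceil,n-1\}$ and $g:=(\beta s\ln n)^{1/2}$, and suppose $s<n-1$. Let $c_{nk}$ be the number of comparisons made by the nonrecursive SELECT on an input list of size $n$ with rank $k$, and set $$\hat\gamma_P:=(4\gamma_P+2)(\beta/\alpha)^{1/2}+(2\gamma_P-1)\big[\alpha+1/f(n)\big].$$ Then $$\mathrm{P}\big[c_{nk}\le n+\min\{k,n-k\}+\hat\gamma_P f(n)\big]\ge1-4n^{-2\beta}.$$ The same holds with $f(n)$ in the definition of $\hat\gamma_P$ replaced by $f(3)$. Moreover, if $\beta\ge1/6$, then $$\mathrm{E}\,c_{nk}\le n+\min\{k,n-k\}+(\hat\gamma_P+4\gamma_P+2)f(n).$$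
   Context: Nonrecursive SELECT. The input is a list $X=(x_1,\dots,x_n)$ of elements of a totally ordered set (repeated values allowed) and an integer $1\le k\le n$. Let $\mathcal R$ be a deterministic routine that finds the $i$th smallest of any $m$ elements using at most $\gamma_P m$ comparisons. 1. Choose a set $I$ of $s$ positions uniformly at random among all $s$-subsets of $\{1,\dots,n\}$. The sample is $S=(x_j)_{j\in I}$ with sorted elements $y_1^*\le\dots\le y_s^*$. 2. Set $i_u:=\max\{\lceil ks/n-g\rceil,1\}$ and $i_v:=\min\{\lceil ks/n+g\rceil,s\}$. Compute $u:=y_{i_u}^*$ and $v:=y_{i_v}^*$ using $\mathcal R$ at most twice on at most $s$ elements, so this step uses at most $2\gamma_P s$ comparisons. 3. Partition. Each $x_j$ with $j\notin I$ is compared with the pivots. - If $k<n/2$: $x_j$ is compared with $v$ first, and with $u$ only if $x_j<v$ and $u<v$. - If $k\ge n/2$: $x_j$ is compared with $u$ first, and with $v$ only if $x_j>u$ and $u<v$. Sample elements are not compared. Hence this step uses $c$ comparisons, where $c=n-s$ if $u=v$, $c=(n-s)+|\{j\notin I:x_j<v\}|$ if $u<v$ and $k<n/2$, and $c=(n-s)+|\{j\notin I:x_j>u\}|$ if $u<v$ and $k\ge n/2$. 4. Let $L=\{x<u\}$, $U=\{x=u\}$, $M=\{u<x<v\}$ and $R=\{x>v\}$. - If $|L|<k\le|L\cup U|$, return $u$; if $|L\cup U\cup M|<k\le n-|R|$, return $v$. In either case set $\hat n:=0$. - Otherwise let $\hat X$ be $L$ if $k\le|L|$, else $R$ if $n-|R|<k$,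 else $M$. Let $\hat n:=|\hat X|$ and find the answer in $\hat X$ with $\mathcal R$, using at most $\gamma_P\hat n$ comparisons. The total count $c_{nk}$ consists of the comparisons in steps 2, 3 and 4, so $c_{nk}\le 2\gamma_P s+c+\gamma_P\hat n$. $\mathrm{P}$ and $\mathrm{E}$ are with respect to the random sample. *)

theory Defs
  imports "HOL-Probability.Probability"
begin

text \<open>Positions of the input list X are 0..<n (n = length X);
  ranks k are 1-based. The deterministic routine R is modelled by its comparison
  count costR xs i (comparisons used to find the i-th smallest of the list xs).\<close>

definition fS :: "nat \<Rightarrow> real" where
  "fS n = real n powr (2/3) * ln (real n) powr (1/3)"

definition sampsz :: "real \<Rightarrow> nat \<Rightarrow> nat" where
  "sampsz \<alpha> n = min (nat \<lceil>\<alpha> * fS n\<rceil>) (n - 1)"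

definition gapS :: "real \<Rightarrow> real \<Rightarrow> nat \<Rightarrow> real" where
  "gapS \<alpha> \<beta> n = sqrt (\<beta> * real (sampsz \<alpha> n) * ln (real n))"

definition idx_u :: "real \<Rightarrow> real \<Rightarrow> nat \<Rightarrow> nat \<Rightarrow> nat" where
  "idx_u \<alpha> \<beta> n k =
     max (nat \<lceil>real k * real (sampsz \<alpha> n) / real n - gapS \<alpha> \<beta> n\<rceil>) 1"

definition idx_v :: "real \<Rightarrow> real \<Rightarrow> nat \<Rightarrow> nat \<Rightarrow> nat" where
  "idx_v \<alpha> \<beta> n k =
     min (nat \<lceil>real k * real (sampsz \<alpha> n) / real n + gapS \<alpha> \<beta> n\<rceil>) (sampsz \<alpha> n)"

definition samples :: "nat \<Rightarrow> nat \<Rightarrow> nat set set" where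
  "samples n s = {I. I \<subseteq> {0..<n} \<and> card I = s}"

definition sample_list :: "'a list \<Rightarrow> nat set \<Rightarrow> 'a list" where
  "sample_list X I = map (\<lambda>j. X ! j) (sorted_list_of_set I)"

definition pivot_u :: "real \<Rightarrow> real \<Rightarrow> 'a::linorder list \<Rightarrow> nat \<Rightarrow> nat set \<Rightarrow> 'a" where
  "pivot_u \<alpha> \<beta> X k I = sort (sample_list X I) ! (idx_u \<alpha> \<beta> (length X) k - 1)"

definition pivot_v :: "real \<Rightarrow> real \<Rightarrow> 'a::linorder list \<Rightarrow> nat \<Rightarrow> nat set \<Rightarrow> 'a" where
  "pivot_v \<alpha> \<beta> X k I = sort (sample_list X I) ! (idx_v \<alpha> \<beta> (length X) k - 1)"

definition part_cost :: "'a::linorder list \<Rightarrow> nat \<Rightarrow> nat set \<Rightarrow> 'a \<Rightarrow> 'a \<Rightarrow> nat" where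
  "part_cost X k I u v =
     (length X - card I) +
     (if u = v then 0
      else if real k < real (length X) / 2
        then card {j \<in> {0..<length X} - I. X ! j < v}
        else card {j \<in> {0..<length X} - I. u < X ! j})"

text \<open>Step 4: comparisons of the final call of R (0 if a pivot is returned).\<close>
definition final_cost :: "('a list \<Rightarrow> nat \<Rightarrow> nat) \<Rightarrow> 'a::linorder list \<Rightarrow> nat \<Rightarrow> 'a \<Rightarrow> 'a \<Rightarrow> nat" where
  "final_cost costR X k u v =
     (let n = length X;
          nL = card {j \<in> {0..<n}. X ! j < u};
          nU = card {j \<in> {0..<n}. X ! j = u};
          nM = card {j \<in> {0..<n}. u < X ! j \<and> X ! j < v};
          nR = card {j \<in> {0..<n}. v < X ! j}
      in if nL < k \<and> k \<le> nL + nU then 0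
         else if nL + nU + nM < k \<and> k \<le> n - nR then 0
         else if k \<le> nL then costR (filter (\<lambda>x. x < u) X) k
         else if n - nR < k then costR (filter (\<lambda>x. v < x) X) (k - (n - nR))
         else costR (filter (\<lambda>x. u < x \<and> x < v) X) (k - (nL + nU)))"

text \<open>Total number of comparisons c_nk for sample positions I (steps 2, 3, 4).\<close>
definition select_cost ::
  "('a list \<Rightarrow> nat \<Rightarrow> nat) \<Rightarrow> real \<Rightarrow> real \<Rightarrow> 'a::linorder list \<Rightarrow> nat \<Rightarrow> nat set \<Rightarrow> nat" where
  "select_cost costR \<alpha> \<beta> X k I =
     (let S = sample_list X I;
          u = pivot_u \<alpha> \<beta> X k I;
          v = pivot_v \<alpha> \<beta> X k I
      in costR S (idx_u \<alpha> \<beta> (length X) k) + costR S (idx_v \<alpha> \<beta> (length X) k)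
         + part_cost X k I u v + final_cost costR X k u v)"

definition gamma_hat :: "real \<Rightarrow> real \<Rightarrow> real \<Rightarrow> real \<Rightarrow> real" where
  "gamma_hat \<alpha> \<beta> \<gamma>P F = (4 * \<gamma>P + 2) * sqrt (\<beta> / \<alpha>) + (2 * \<gamma>P - 1) * (\<alpha> + 1 / F)"

end

(*
  Let u and v be the pivots and \<Delta> = g n / s the half-width of the pivot window measured in ranks
  of the input. Call a sample good if u and v lie within 2\<Delta> ranks of the target and bracket it
  (unless the window is clipped at an end of the sample). This fails only if the number of sampled
  positions among the m smallest entries of X deviates by at least g from its mean m s / n, for one
  of four values of m. For a uniformly random s-subset that count is hypergeometric, and a Hoeffding
  bound for sampling without replacement, proved by induction on s via the moment generating
  function, bounds each deviation by exp (-2 g\<^sup>2 / s) = n powr (-2 \<beta>).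
  For a good sample the partitioning step costs at most n - s + min k (n - k) + 2\<Delta> comparisons and
  the final call of R at most 4 \<gamma>P \<Delta>; with 2 \<gamma>P s for the pivots, s < \<alpha> fS n + 1 and
  \<Delta> \<le> sqrt (\<beta> / \<alpha>) fS n this gives the bound. A bad sample costs at most (\<gamma>P + 1) n more,
  which contributes O(fS n) to the expectation once \<beta> \<ge> 1/6.
*)

theory Submission
  imports Defs
begin

section \<open>Hoeffding's bound for sampling without replacement\<close>

lemma bernoulli_centered_mgf_le:
  fixes p h :: real
  assumes "0 \<le> p" "p \<le> 1"
  shows "p * exp (h * (1 - p)) + (1 - p) * exp (- (h * p)) \<le> exp (h\<^sup>2 / 8)"
proof -
  have nonneg: "p * exp (h * (1 - p)) + (1 - p) * exp (- (h * p)) \<le> exp (h\<^sup>2 / 8)"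
    if "0 \<le> p" "p \<le> 1" "0 \<le> h" for p h :: real
  proof -
    have pos: "1 + p * (exp h - 1) > 0"
      using that by (intro add_pos_nonneg mult_nonneg_nonneg) auto
    have "p * exp (h * (1 - p)) + (1 - p) * exp (- (h * p))
          = exp (-h * p + ln (1 + p * (exp h - 1)))"
      using pos by (simp add: algebra_simps exp_diff exp_minus field_simps flip: exp_add)
    also have "\<dots> \<le> exp (h\<^sup>2 / 8)"
      using Hoeffdings_lemma_aux[of h p] that by simp
    finally show ?thesis .
  qed
  show ?thesis
  proof (cases "h \<ge> 0")
    case True
    with nonneg assms show ?thesis by blast
  next
    case False
    with nonneg[of "1 - p" "-h"] assms show ?thesis by (simp add: algebra_simps)
  qed
qed

lemma sum_Suc_subsets_double_count:
  fixes F :: "'b set \<Rightarrow> real"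
  assumes U: "finite U"
  shows "real (Suc s) * (\<Sum>I | I \<subseteq> U \<and> card I = Suc s. F I)
       = (\<Sum>x\<in>U. \<Sum>J | J \<subseteq> U - {x} \<and> card J = s. F (insert x J))"
proof -
  let ?Sub = "{I. I \<subseteq> U \<and> card I = Suc s}"
  have "real (Suc s) * (\<Sum>I\<in>?Sub. F I) = (\<Sum>I\<in>?Sub. \<Sum>x | x \<in> U \<and> x \<in> I. F I)"
    unfolding sum_distrib_left by (intro sum.cong refl) (auto simp: Int_absorb1 Collect_conj_eq)
  also have "\<dots> = (\<Sum>x\<in>U. \<Sum>I | I \<in> ?Sub \<and> x \<in> I. F I)"
    using U by (intro sum.swap_restrict) (auto intro: finite_subset[of _ "Pow U"])
  also have "\<dots> = (\<Sum>x\<in>U. \<Sum>J | J \<subseteq> U - {x} \<and> card J = s. F (insert x J))"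
  proof (rule sum.cong[OF refl])
    fix x assume x: "x \<in> U"
    have "{I. I \<in> ?Sub \<and> x \<in> I} = insert x ` {J. J \<subseteq> U - {x} \<and> card J = s}"
    proof (intro equalityI subsetI)
      fix I assume "I \<in> {I. I \<in> ?Sub \<and> x \<in> I}"
      moreover from this U have "finite I" by (auto dest: finite_subset)
      ultimately show "I \<in> insert x ` {J. J \<subseteq> U - {x} \<and> card J = s}"
        by (intro image_eqI[of _ _ "I - {x}"]) auto
    next
      fix I assume "I \<in> insert x ` {J. J \<subseteq> U - {x} \<and> card J = s}"
      moreover from this U have "finite I" by (auto dest: finite_subset)
      ultimately show "I \<in> {I. I \<in> ?Sub \<and> x \<in> I}" using x by (auto simp: card_insert_if)
    qed
    moreover have "inj_on (insert x) {J. J \<subseteq> U - {x} \<and> card J = s}"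
      by (rule inj_onI) (metis Diff_insert_absorb mem_Collect_eq subset_Diff_insert)
    ultimately show "(\<Sum>I | I \<in> ?Sub \<and> x \<in> I. F I) = (\<Sum>J | J \<subseteq> U - {x} \<and> card J = s. F (insert x J))"
      by (simp add: sum.reindex)
  qed
  finally show ?thesis .
qed

lemma hypergeometric_mgf_step:
  fixes N m s l :: real
  assumes N: "N \<ge> 1" and m: "0 \<le> m" "m \<le> N" and s: "0 \<le> s" "s \<le> N - 1"
  shows "m * exp (l + l * s * (m - 1) / (N - 1)) + (N - m) * exp (l * s * m / (N - 1))
         \<le> N * exp (l * (s + 1) * m / N + l\<^sup>2 / 8)"
proof -
  define p where "p = m / N"
  define d where "d = 1 - s / (N - 1)"
  define \<mu> where "\<mu> = (s + 1) * m / N"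
  have p01: "0 \<le> p" "p \<le> 1" using N m by (auto simp: p_def)
  have d01: "0 \<le> d \<and> d \<le> 1" using N s by (cases "N = 1") (auto simp: d_def field_simps)
  have e1: "l + l * s * (m - 1) / (N - 1) = l * \<mu> + (l * d) * (1 - p)"
   and e0: "l * s * m / (N - 1) = l * \<mu> + (- ((l * d) * p))"
    using N s by (cases "N = 1"; simp add: \<mu>_def d_def p_def field_simps)+
  have "m * exp (l + l * s * (m - 1) / (N - 1)) + (N - m) * exp (l * s * m / (N - 1))
      = N * exp (l * \<mu>) * (p * exp ((l * d) * (1 - p)) + (1 - p) * exp (- ((l * d) * p)))"
    unfolding e1 e0 exp_add using N by (simp add: p_def field_simps)
  also have "\<dots> \<le> N * exp (l * \<mu>) * exp ((l * d)\<^sup>2 / 8)"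
    using bernoulli_centered_mgf_le[OF p01] N by (intro mult_left_mono) auto
  also have "\<dots> \<le> N * exp (l * \<mu>) * exp (l\<^sup>2 / 8)"
  proof -
    have "(l * d)\<^sup>2 \<le> l\<^sup>2"
      using d01 by (simp add: power_mult_distrib mult_left_le power_le_one)
    then show ?thesis using N by (intro mult_left_mono) auto
  qed
  also have "\<dots> = N * exp (l * (s + 1) * m / N + l\<^sup>2 / 8)"
    by (simp add: \<mu>_def exp_add)
  finally show ?thesis .
qed

lemma sum_exp_card_insert_Int:
  fixes A U :: "'b set" and l :: real
  assumes "finite U" "x \<in> U"
  shows "(\<Sum>J | J \<subseteq> U - {x} \<and> card J = s. exp (l * card (insert x J \<inter> A)))
       = exp (l * of_bool (x \<in> A)) * (\<Sum>J | J \<subseteq> U - {x} \<and> card J = s. exp (l * card (J \<inter> A)))"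
  unfolding sum_distrib_left
proof (rule sum.cong[OF refl])
  fix J assume "J \<in> {J. J \<subseteq> U - {x} \<and> card J = s}"
  then have "finite J" "x \<notin> J"
    using assms by (auto dest: finite_subset)
  then have "card (insert x J \<inter> A) = of_bool (x \<in> A) + card (J \<inter> A)"
    by (simp add: Int_insert_left)
  then show "exp (l * card (insert x J \<inter> A)) = exp (l * of_bool (x \<in> A)) * exp (l * card (J \<inter> A))"
    by (simp add: distrib_left exp_add)
qed

lemma sum_exp_card_Int_subsets_le:
  fixes A U :: "'b set" and l :: real
  assumes "finite U" "s \<le> card U"
  shows "(\<Sum>I | I \<subseteq> U \<and> card I = s. exp (l * card (I \<inter> A)))
     \<le> (card U choose s) * exp (l * s * card (U \<inter> A) / card U + l\<^sup>2 * s / 8)"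
  using assms
proof (induction s arbitrary: U)
  case 0
  then have "{I. I \<subseteq> U \<and> card I = 0} = {{}}"
    by (auto dest: finite_subset)
  then show ?case by simp
next
  case (Suc s U)
  note U = \<open>finite U\<close>
  define N where "N = card U"
  define m where "m = card (U \<inter> A)"
  define a where "a = exp (l + l * s * (real m - 1) / (real N - 1))"
  define b where "b = exp (l * s * m / (real N - 1))"
  have sN: "Suc s \<le> N" and mN: "m \<le> N"
    using Suc.prems U by (auto simp: N_def m_def intro: card_mono)
  have step: "(\<Sum>J | J \<subseteq> U - {x} \<and> card J = s. exp (l * card (insert x J \<inter> A)))
      \<le> (N - 1 choose s) * exp (l\<^sup>2 * s / 8) * (if x \<in> A then a else b)" if x: "x \<in> U" for x
  proof -
    have "x \<in> A \<Longrightarrow> 0 < m"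
      using x U by (auto simp: m_def card_gt_0_iff)
    then have "card ((U - {x}) \<inter> A) + of_bool (x \<in> A) = m"
      using x U by (auto simp: m_def Int_Diff[symmetric] Diff_Int_distrib2)
    then have "real (card ((U - {x}) \<inter> A)) = real m - of_bool (x \<in> A)"
      by (cases "x \<in> A") auto
    moreover have "card (U - {x}) = N - 1"
      using x U by (simp add: N_def)
    ultimately have "(\<Sum>J | J \<subseteq> U - {x} \<and> card J = s. exp (l * card (J \<inter> A)))
        \<le> (N - 1 choose s) * exp (l * s * (real m - of_bool (x \<in> A)) / (real N - 1) + l\<^sup>2 * s / 8)"
      using Suc.IH[of "U - {x}"] U sN by (simp add: of_nat_diff)
    then show ?thesis
      unfolding sum_exp_card_insert_Int[OF U x]
      by (cases "x \<in> A") (simp_all add: a_def b_def exp_add mult_ac)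
  qed
  have "real (Suc s) * (\<Sum>I | I \<subseteq> U \<and> card I = Suc s. exp (l * card (I \<inter> A)))
      \<le> (\<Sum>x\<in>U. (N - 1 choose s) * exp (l\<^sup>2 * s / 8) * (if x \<in> A then a else b))"
    unfolding sum_Suc_subsets_double_count[OF U] by (intro sum_mono step)
  also have "\<dots> = (N - 1 choose s) * exp (l\<^sup>2 * s / 8) * (m * a + (real N - m) * b)"
    using U mN by (simp add: sum_distrib_left[symmetric] sum.If_cases N_def m_def
        card_Diff_subset_Int Diff_eq[symmetric] of_nat_diff Int_commute)
  also have "\<dots> \<le> (N - 1 choose s) * exp (l\<^sup>2 * s / 8) * (N * exp (l * (s + 1) * m / N + l\<^sup>2 / 8))"
    unfolding a_def b_def using hypergeometric_mgf_step[of N m s l] sN mN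
    by (intro mult_left_mono) (auto simp: add.commute)
  also have "\<dots> = real (Suc s) * ((N choose Suc s) * exp (l * Suc s * m / N + l\<^sup>2 * Suc s / 8))"
  proof -
    have "real (Suc s) * real (N choose Suc s) = real N * real (N - 1 choose s)"
      using times_binomial_minus1_eq[of "Suc s" N] by (metis diff_Suc_1 of_nat_mult zero_less_Suc)
    moreover have "exp (l * Suc s * m / N + l\<^sup>2 * Suc s / 8)
        = exp (l\<^sup>2 * s / 8) * exp (l * (s + 1) * m / N + l\<^sup>2 / 8)"
      by (simp add: exp_add[symmetric] algebra_simps add_divide_distrib)
    ultimately show ?thesis
      by (simp only: mult.assoc[symmetric]) (simp only: mult_ac)
  qed
  finally show ?case
    unfolding N_def m_def by (simp add: mult_le_cancel_left)
qed

lemma hypergeometric_Chernoff_bound: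
  fixes A U :: "'b set" and l c :: real
  assumes U: "finite U" "s \<le> card U"
    and P: "\<And>I. I \<subseteq> U \<Longrightarrow> card I = s \<Longrightarrow> P I \<Longrightarrow> c \<le> l * card (I \<inter> A)"
  shows "measure_pmf.prob (pmf_of_set {I. I \<subseteq> U \<and> card I = s}) {I. P I}
     \<le> exp (l * s * card (U \<inter> A) / card U + l\<^sup>2 * s / 8 - c)"
proof -
  let ?\<Omega> = "{I. I \<subseteq> U \<and> card I = s}"
  have fin: "finite ?\<Omega>"
    using U by (auto intro: finite_subset[of _ "Pow U"])
  have card_\<Omega>: "card ?\<Omega> = card U choose s"
    using U by (simp add: n_subsets)
  have C_pos: "0 < card U choose s"
    using U by simp
  have "real (card (?\<Omega> \<inter> {I. P I})) = (\<Sum>I \<in> ?\<Omega> \<inter> {I. P I}. 1)"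
    by simp
  also have "\<dots> \<le> (\<Sum>I \<in> ?\<Omega> \<inter> {I. P I}. exp (l * card (I \<inter> A) - c))"
    using P by (intro sum_mono) auto
  also have "\<dots> \<le> (\<Sum>I \<in> ?\<Omega>. exp (l * card (I \<inter> A) - c))"
    using fin by (intro sum_mono2) auto
  also have "\<dots> = exp (- c) * (\<Sum>I \<in> ?\<Omega>. exp (l * card (I \<inter> A)))"
    by (simp add: sum_distrib_left exp_diff exp_minus field_simps)
  also have "\<dots> \<le> exp (- c) * ((card U choose s) * exp (l * s * card (U \<inter> A) / card U + l\<^sup>2 * s / 8))"
    using sum_exp_card_Int_subsets_le[OF U, of l A] by (intro mult_left_mono) auto
  also have "\<dots> = (card U choose s) * exp (l * s * card (U \<inter> A) / card U + l\<^sup>2 * s / 8 - c)"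
    by (simp only: exp_diff exp_minus divide_inverse mult_ac)
  finally have "real (card (?\<Omega> \<inter> {I. P I}))
      \<le> (card U choose s) * exp (l * s * card (U \<inter> A) / card U + l\<^sup>2 * s / 8 - c)" .
  moreover have "?\<Omega> \<noteq> {}"
    using card_\<Omega> C_pos by (metis card.empty less_irrefl)
  ultimately show ?thesis
    using fin C_pos by (simp add: measure_pmf_of_set card_\<Omega> pos_divide_le_eq mult.commute)
qed

lemma hypergeometric_upper_tail:
  fixes A U :: "'b set" and t :: real
  assumes U: "finite U" "s \<le> card U" and "0 < s" "0 \<le> t"
  shows "measure_pmf.prob (pmf_of_set {I. I \<subseteq> U \<and> card I = s})
           {I. real s * card (U \<inter> A) / card U + t \<le> card (I \<inter> A)} \<le> exp (-2 * t\<^sup>2 / s)"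
proof -
  define \<mu> where "\<mu> = real s * card (U \<inter> A) / card U"
  define l where "l = 4 * t / s"
  have "measure_pmf.prob (pmf_of_set {I. I \<subseteq> U \<and> card I = s}) {I. \<mu> + t \<le> card (I \<inter> A)}
     \<le> exp (l * s * card (U \<inter> A) / card U + l\<^sup>2 * s / 8 - l * (\<mu> + t))"
    using assms by (intro hypergeometric_Chernoff_bound[OF U])
      (auto simp: l_def intro!: mult_left_mono divide_right_mono)
  also have "l * s * card (U \<inter> A) / card U + l\<^sup>2 * s / 8 - l * (\<mu> + t) = -2 * t\<^sup>2 / s"
    using assms by (simp add: l_def \<mu>_def field_simps power2_eq_square)
  finally show ?thesis by (simp add: \<mu>_def)
qed

lemma hypergeometric_lower_tail:
  fixes A U :: "'b set" and t :: real
  assumes U: "finite U" "s \<le> card U" and "0 < s" "0 \<le> t"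
  shows "measure_pmf.prob (pmf_of_set {I. I \<subseteq> U \<and> card I = s})
           {I. card (I \<inter> A) \<le> real s * card (U \<inter> A) / card U - t} \<le> exp (-2 * t\<^sup>2 / s)"
proof -
  define \<mu> where "\<mu> = real s * card (U \<inter> A) / card U"
  define l where "l = - (4 * t / s)"
  have "measure_pmf.prob (pmf_of_set {I. I \<subseteq> U \<and> card I = s}) {I. card (I \<inter> A) \<le> \<mu> - t}
     \<le> exp (l * s * card (U \<inter> A) / card U + l\<^sup>2 * s / 8 - l * (\<mu> - t))"
    using assms by (intro hypergeometric_Chernoff_bound[OF U])
      (auto simp: l_def intro!: mult_left_mono divide_right_mono)
  also have "l * s * card (U \<inter> A) / card U + l\<^sup>2 * s / 8 - l * (\<mu> - t) = -2 * t\<^sup>2 / s"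
    using assms by (simp add: l_def \<mu>_def field_simps power2_eq_square)
  finally show ?thesis by (simp add: \<mu>_def)
qed

section \<open>Ranks in a sample\<close>

lemma length_filter_sort_nth:
  fixes S :: "'a::linorder list"
  assumes i: "1 \<le> i" "i \<le> length S"
  shows "length (filter (\<lambda>x. x < sort S ! (i - 1)) S) \<le> i - 1"
    and "length (filter (\<lambda>x. sort S ! (i - 1) < x) S) \<le> length S - i"
proof -
  let ?ys = "sort S"
  have len_filter: "length (filter P S) = card {j. j < length ?ys \<and> P (?ys ! j)}" for P
    by (metis length_filter_conv_card mset_filter mset_sort size_mset)
  have "{j. j < length ?ys \<and> ?ys ! j < ?ys ! (i - 1)} \<subseteq> {..<i - 1}"
  proof
    fix j assume j: "j \<in> {j. j < length ?ys \<and> ?ys ! j < ?ys ! (i - 1)}"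
    show "j \<in> {..<i - 1}"
    proof (rule ccontr)
      assume "j \<notin> {..<i - 1}"
      then have "?ys ! (i - 1) \<le> ?ys ! j" using i j by (intro sorted_nth_mono) auto
      with j show False by auto
    qed
  qed
  then show "length (filter (\<lambda>x. x < sort S ! (i - 1)) S) \<le> i - 1"
    unfolding len_filter by (metis card_lessThan card_mono finite_lessThan)
  have "{j. j < length ?ys \<and> ?ys ! (i - 1) < ?ys ! j} \<subseteq> {i..<length S}"
  proof
    fix j assume j: "j \<in> {j. j < length ?ys \<and> ?ys ! (i - 1) < ?ys ! j}"
    show "j \<in> {i..<length S}"
    proof (rule ccontr)
      assume "j \<notin> {i..<length S}"
      then have "?ys ! j \<le> ?ys ! (i - 1)" using i j by (intro sorted_nth_mono) auto
      with j show False by auto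
    qed
  qed
  then show "length (filter (\<lambda>x. sort S ! (i - 1) < x) S) \<le> length S - i"
    unfolding len_filter by (metis card_atLeastLessThan card_mono finite_atLeastLessThan)
qed

lemma length_filter_sample_list:
  assumes "finite I"
  shows "length (filter P (sample_list X I)) = card {j \<in> I. P (X ! j)}"
proof -
  have "length (filter P (sample_list X I)) = length (filter (\<lambda>j. P (X ! j)) (sorted_list_of_set I))"
    by (simp add: sample_list_def filter_map comp_def)
  also have "\<dots> = card {j \<in> I. P (X ! j)}"
    using assms by (simp add: distinct_length_filter Collect_conj_eq Int_commute)
  finally show ?thesis .
qed

lemma length_sample_list: "finite I \<Longrightarrow> length (sample_list X I) = card I"
  by (simp add: sample_list_def)

lemma card_sample_sort_nth:
  fixes X :: "'a::linorder list"
  assumes "finite I" "1 \<le> i" "i \<le> card I"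
  shows "card {j \<in> I. X ! j < sort (sample_list X I) ! (i - 1)} \<le> i - 1"
    and "card {j \<in> I. sort (sample_list X I) ! (i - 1) < X ! j} \<le> card I - i"
  using length_filter_sort_nth[of i "sample_list X I"] assms
  by (simp_all add: length_filter_sample_list length_sample_list)

definition rank_set :: "'a::linorder list \<Rightarrow> nat \<Rightarrow> nat set" where
  "rank_set X m = set (take m (sort_key (\<lambda>j. X ! j) [0..<length X]))"

lemma finite_rank_set [simp]: "finite (rank_set X m)"
  by (simp add: rank_set_def)

lemma rank_set_subset: "rank_set X m \<subseteq> {0..<length X}"
  using set_take_subset by (fastforce simp: rank_set_def)

lemma card_rank_set: "m \<le> length X \<Longrightarrow> card (rank_set X m) = m"
  by (simp add: rank_set_def distinct_card)

lemma rank_set_length: "rank_set X (length X) = {0..<length X}"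
  by (simp add: rank_set_def)

lemma rank_set_le:
  assumes "j \<in> rank_set X m" "j' \<in> {0..<length X} - rank_set X m"
  shows "X ! j \<le> X ! j'"
proof -
  define P where "P = sort_key (\<lambda>j. X ! j) [0..<length X]"
  have P: "set P = {0..<length X}" "distinct P" "sorted (map (\<lambda>j. X ! j) P)"
    by (simp_all add: P_def)
  obtain a where a: "a < min m (length P)" "j = P ! a"
    using assms(1) by (auto simp: rank_set_def P_def[symmetric] in_set_conv_nth)
  obtain b where b: "b < length P" "j' = P ! b"
    using assms(2) P(1) by (metis DiffD1 in_set_conv_nth)
  have "\<not> b < m"
    using assms(2) b by (auto simp: rank_set_def P_def[symmetric] in_set_conv_nth)
  then have "map (\<lambda>j. X ! j) P ! a \<le> map (\<lambda>j. X ! j) P ! b"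
    using a b P(3) by (intro sorted_nth_mono) auto
  then show ?thesis
    using a b by simp
qed

lemma card_less_lt_rank_if_sample_hits:
  fixes X :: "'a::linorder list"
  assumes m: "m \<le> length X" and "finite I"
    and hits: "card {j \<in> I. X ! j < w} < card (I \<inter> rank_set X m)"
  shows "card {j \<in> {0..<length X}. X ! j < w} < m"
proof (rule ccontr)
  define L where "L = {j \<in> {0..<length X}. X ! j < w}"
  assume "\<not> card L < m"
  have "rank_set X m \<subseteq> L"
  proof
    fix j assume j: "j \<in> rank_set X m"
    show "j \<in> L"
    proof (rule ccontr)
      assume "j \<notin> L"
      then have "w \<le> X ! j"
        using j rank_set_subset by (force simp: L_def)
      have "L \<subseteq> rank_set X m - {j}"
      proof
        fix l assume l: "l \<in> L"
        then have "l \<in> rank_set X m"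
          using rank_set_le[OF j, of l] \<open>w \<le> X ! j\<close> by (force simp: L_def)
        moreover have "l \<noteq> j"
          using l \<open>j \<notin> L\<close> by blast
        ultimately show "l \<in> rank_set X m - {j}" by blast
      qed
      then have "card L \<le> card (rank_set X m - {j})"
        by (intro card_mono) auto
      also have "\<dots> < m"
        using j card_rank_set[OF m] card_gt_0_iff[of "rank_set X m"] by auto
      finally show False
        using \<open>\<not> card L < m\<close> by simp
    qed
  qed
  then have "card (I \<inter> rank_set X m) \<le> card {j \<in> I. X ! j < w}"
    using \<open>finite I\<close> by (intro card_mono) (auto simp: L_def)
  with hits show False by simp
qed

lemma card_greater_lt_rank_if_sample_hits:
  fixes X :: "'a::linorder list"
  assumes m: "m \<le> length X" and I: "I \<subseteq> {0..<length X}"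
    and hits: "card {j \<in> I. w < X ! j} < card (I - rank_set X m)"
  shows "card {j \<in> {0..<length X}. w < X ! j} < length X - m"
proof (rule ccontr)
  define G where "G = {j \<in> {0..<length X}. w < X ! j}"
  define C where "C = {0..<length X} - rank_set X m"
  assume "\<not> card G < length X - m"
  have card_C: "card C = length X - m"
    using m by (simp add: C_def card_Diff_subset[OF finite_rank_set rank_set_subset] card_rank_set)
  have "C \<subseteq> G"
  proof
    fix j' assume j': "j' \<in> C"
    show "j' \<in> G"
    proof (rule ccontr)
      assume "j' \<notin> G"
      then have "X ! j' \<le> w"
        using j' by (force simp: G_def C_def)
      have "G \<subseteq> C - {j'}"
      proof
        fix l assume l: "l \<in> G"
        then have "l \<in> C"
          using rank_set_le[of l X m j'] j' \<open>X ! j' \<le> w\<close> by (force simp: G_def C_def)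
        moreover have "l \<noteq> j'"
          using l \<open>j' \<notin> G\<close> by blast
        ultimately show "l \<in> C - {j'}" by blast
      qed
      then have "card G \<le> card (C - {j'})"
        by (intro card_mono) (auto simp: C_def)
      also have "\<dots> < length X - m"
        using j' card_C card_gt_0_iff[of C] by (auto simp: C_def)
      finally show False
        using \<open>\<not> card G < length X - m\<close> by simp
    qed
  qed
  then have "card (I - rank_set X m) \<le> card {j \<in> I. w < X ! j}"
    using I by (intro card_mono) (auto simp: G_def C_def intro: finite_subset)
  with hits show False by simp
qed

section \<open>Comparison counts of SELECT\<close>

lemma part_cost_le:
  fixes X :: "'a::linorder list"
  shows "part_cost X k I u v \<le> (length X - card I) +
     (if u = v then 0 else if real k < real (length X) / 2
        then card {j \<in> {0..<length X}. X ! j < v} else card {j \<in> {0..<length X}. u < X ! j})"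
proof -
  have "card {j \<in> {0..<length X} - I. X ! j < v} \<le> card {j \<in> {0..<length X}. X ! j < v}"
    and "card {j \<in> {0..<length X} - I. u < X ! j} \<le> card {j \<in> {0..<length X}. u < X ! j}"
    by (auto intro: card_mono)
  then show ?thesis
    unfolding part_cost_def by auto
qed

lemma final_cost_le:
  fixes X :: "'a::linorder list" and u v :: 'a and B \<gamma>P :: real
  defines "nL \<equiv> card {j \<in> {0..<length X}. X ! j < u}"
    and "nM \<equiv> card {j \<in> {0..<length X}. u < X ! j \<and> X ! j < v}"
    and "nR \<equiv> card {j \<in> {0..<length X}. v < X ! j}"
  assumes cR: "\<And>xs i. 1 \<le> i \<Longrightarrow> i \<le> length xs \<Longrightarrow> real (costR xs i) \<le> \<gamma>P * real (length xs)"
    and "1 \<le> k" "k \<le> length X" "0 \<le> \<gamma>P" "0 \<le> B"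
    and BL: "k \<le> nL \<Longrightarrow> nL \<le> B" and BR: "length X - nR < k \<Longrightarrow> nR \<le> B" and BM: "nM \<le> B"
  shows "real (final_cost costR X k u v) \<le> \<gamma>P * B"
proof -
  define n where "n = length X"
  define nU where "nU = card {j \<in> {0..<n}. X ! j = u}"
  have call: "real (costR (filter P X) i) \<le> \<gamma>P * B"
    if "1 \<le> i" "i \<le> card {j \<in> {0..<n}. P (X ! j)}" "card {j \<in> {0..<n}. P (X ! j)} \<le> B" for P i
  proof -
    have "real (costR (filter P X) i) \<le> \<gamma>P * card {j \<in> {0..<n}. P (X ! j)}"
      using cR[of i "filter P X"] that by (simp add: length_filter_conv_card n_def)
    also have "\<dots> \<le> \<gamma>P * B"
      using that \<open>0 \<le> \<gamma>P\<close> by (intro mult_left_mono) auto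
    finally show ?thesis .
  qed
  have "nR \<le> card {0..<length X}"
    unfolding nR_def by (intro card_mono) auto
  then have "nR \<le> n"
    by (simp add: n_def)
  have fc: "final_cost costR X k u v =
     (if nL < k \<and> k \<le> nL + nU then 0
      else if nL + nU + nM < k \<and> k \<le> n - nR then 0
      else if k \<le> nL then costR (filter (\<lambda>x. x < u) X) k
      else if n - nR < k then costR (filter (\<lambda>x. v < x) X) (k - (n - nR))
      else costR (filter (\<lambda>x. u < x \<and> x < v) X) (k - (nL + nU)))"
    unfolding final_cost_def Let_def nL_def nU_def nM_def nR_def n_def by simp
  consider "nL < k \<and> k \<le> nL + nU \<or> nL + nU + nM < k \<and> k \<le> n - nR"
    | "\<not> (nL < k \<and> k \<le> nL + nU \<or> nL + nU + nM < k \<and> k \<le> n - nR)" "k \<le> nL"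
    | "\<not> (nL < k \<and> k \<le> nL + nU \<or> nL + nU + nM < k \<and> k \<le> n - nR)" "\<not> k \<le> nL" "n - nR < k"
    | "\<not> (nL < k \<and> k \<le> nL + nU \<or> nL + nU + nM < k \<and> k \<le> n - nR)" "\<not> k \<le> nL" "\<not> n - nR < k"
    by blast
  then show ?thesis
  proof cases
    case 1
    then show ?thesis using fc \<open>0 \<le> \<gamma>P\<close> \<open>0 \<le> B\<close> by auto
  next
    case 2
    then show ?thesis using fc call[of k "\<lambda>x. x < u"] \<open>1 \<le> k\<close> BL by (simp add: nL_def n_def)
  next
    case 3
    then show ?thesis using fc call[of "k - (n - nR)" "\<lambda>x. v < x"] \<open>nR \<le> n\<close> \<open>k \<le> length X\<close> BR
      by (simp add: nR_def n_def)
  next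
    case 4
    then have "1 \<le> k - (nL + nU)" "k - (nL + nU) \<le> nM"
      by linarith+
    with 4 show ?thesis
      using fc call[of "k - (nL + nU)" "\<lambda>x. u < x \<and> x < v"] BM by (simp add: nM_def n_def)
  qed
qed

lemma select_cost_le:
  fixes X :: "'a::linorder list" and \<alpha> \<beta> \<gamma>P :: real and k :: nat and I :: "nat set"
  defines "n \<equiv> length X" and "u \<equiv> pivot_u \<alpha> \<beta> X k I" and "v \<equiv> pivot_v \<alpha> \<beta> X k I"
  assumes cR: "\<And>xs i. 1 \<le> i \<Longrightarrow> i \<le> length xs \<Longrightarrow> real (costR xs i) \<le> \<gamma>P * real (length xs)"
    and I: "I \<subseteq> {0..<n}"
    and idx: "1 \<le> idx_u \<alpha> \<beta> n k" "idx_u \<alpha> \<beta> n k \<le> card I" "1 \<le> idx_v \<alpha> \<beta> n k" "idx_v \<alpha> \<beta> n k \<le> card I"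
  shows "real (select_cost costR \<alpha> \<beta> X k I) \<le> 2 * \<gamma>P * card I + real (n - card I)
     + real (if u = v then 0 else if real k < real n / 2
             then card {j \<in> {0..<n}. X ! j < v} else card {j \<in> {0..<n}. u < X ! j})
     + real (final_cost costR X k u v)"
proof -
  have "length (sample_list X I) = card I"
    using I by (simp add: sample_list_def finite_subset)
  then have "real (costR (sample_list X I) (idx_u \<alpha> \<beta> n k)) \<le> \<gamma>P * card I"
    and "real (costR (sample_list X I) (idx_v \<alpha> \<beta> n k)) \<le> \<gamma>P * card I"
    using cR[of "idx_u \<alpha> \<beta> n k" "sample_list X I"] cR[of "idx_v \<alpha> \<beta> n k" "sample_list X I"] idx
    by auto
  moreover have "real (part_cost X k I u v) \<le> real (n - card I) + real (if u = v then 0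
      else if real k < real n / 2 then card {j \<in> {0..<n}. X ! j < v} else card {j \<in> {0..<n}. u < X ! j})"
    using part_cost_le[of X k I u v] unfolding n_def by linarith
  ultimately show ?thesis
    by (simp add: select_cost_def Let_def u_def v_def n_def)
qed

lemma select_cost_le_worst_case:
  fixes X :: "'a::linorder list" and \<alpha> \<beta> \<gamma>P :: real
  assumes cR: "\<And>xs i. 1 \<le> i \<Longrightarrow> i \<le> length xs \<Longrightarrow> real (costR xs i) \<le> \<gamma>P * real (length xs)"
    and "0 \<le> \<gamma>P" and I: "I \<subseteq> {0..<length X}"
    and "1 \<le> idx_u \<alpha> \<beta> (length X) k" "idx_u \<alpha> \<beta> (length X) k \<le> card I"
    and "1 \<le> idx_v \<alpha> \<beta> (length X) k" "idx_v \<alpha> \<beta> (length X) k \<le> card I"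
    and "1 \<le> k" "k \<le> length X"
  shows "real (select_cost costR \<alpha> \<beta> X k I) \<le> (2 * \<gamma>P - 1) * card I + (\<gamma>P + 2) * length X"
proof -
  have count_le: "card {j \<in> {0..<length X}. P j} \<le> length X" for P
    by (rule order.trans[OF card_mono[of "{0..<length X}"]]) auto
  define u where "u = pivot_u \<alpha> \<beta> X k I"
  define v where "v = pivot_v \<alpha> \<beta> X k I"
  have "card I \<le> length X"
    using I by (rule order.trans[OF card_mono[of "{0..<length X}"], rotated]) auto
  have "real (final_cost costR X k u v) \<le> \<gamma>P * length X"
    using assms count_le by (intro final_cost_le[OF cR]) auto
  moreover have "real (if u = v then 0 else if real k < real (length X) / 2
      then card {j \<in> {0..<length X}. X ! j < v} else card {j \<in> {0..<length X}. u < X ! j}) \<le> length X"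
    using count_le by simp
  ultimately have "real (select_cost costR \<alpha> \<beta> X k I)
      \<le> 2 * \<gamma>P * card I + real (length X - card I) + length X + \<gamma>P * length X"
    using select_cost_le[where costR = costR, OF cR I assms(4-7)] unfolding u_def v_def by linarith
  also have "\<dots> = (2 * \<gamma>P - 1) * card I + (\<gamma>P + 2) * length X"
    using \<open>card I \<le> length X\<close> by (simp add: of_nat_diff algebra_simps)
  finally show ?thesis .
qed

lemma card_less_plus_card_greater:
  fixes X :: "'a::linorder list"
  assumes "u < v"
  shows "card {j \<in> {0..<length X}. X ! j < v} + card {j \<in> {0..<length X}. u < X ! j}
       = length X + card {j \<in> {0..<length X}. u < X ! j \<and> X ! j < v}"
proof -
  have "{j \<in> {0..<length X}. X ! j < v} \<union> {j \<in> {0..<length X}. u < X ! j} = {0..<length X}"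
    using assms by auto
  moreover have "{j \<in> {0..<length X}. X ! j < v} \<inter> {j \<in> {0..<length X}. u < X ! j}
      = {j \<in> {0..<length X}. u < X ! j \<and> X ! j < v}"
    by auto
  ultimately show ?thesis
    using card_Un_Int[of "{j \<in> {0..<length X}. X ! j < v}" "{j \<in> {0..<length X}. u < X ! j}"] by simp
qed

lemma final_cost_le_of_ranks:
  fixes X :: "'a::linorder list" and u v :: 'a and \<gamma>P D :: real
  defines "n \<equiv> length X"
  assumes cR: "\<And>xs i. 1 \<le> i \<Longrightarrow> i \<le> length xs \<Longrightarrow> real (costR xs i) \<le> \<gamma>P * real (length xs)"
    and "0 \<le> \<gamma>P" "0 \<le> D" "u \<le> v" and k: "1 \<le> k" "k \<le> n"
    and v_rank: "card {j \<in> {0..<n}. X ! j < v} < k + 2 * D"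
    and u_rank: "card {j \<in> {0..<n}. u < X ! j} \<le> real n - k + 2 * D"
    and left: "k \<le> card {j \<in> {0..<n}. X ! j < u} \<Longrightarrow> k \<le> D"
    and right: "n - card {j \<in> {0..<n}. v < X ! j} < k \<Longrightarrow> real n - k < D"
  shows "real (final_cost costR X k u v) \<le> \<gamma>P * (4 * D)"
proof (rule final_cost_le[where costR = costR, OF cR])
  show "real (card {j \<in> {0..<length X}. u < X ! j \<and> X ! j < v}) \<le> 4 * D"
  proof (cases "u = v")
    case False
    with \<open>u \<le> v\<close> have "u < v" by simp
    from card_less_plus_card_greater[OF this, of X]
    have "real (card {j \<in> {0..<n}. X ! j < v}) + card {j \<in> {0..<n}. u < X ! j}
        = n + card {j \<in> {0..<length X}. u < X ! j \<and> X ! j < v}"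
      unfolding n_def of_nat_add[symmetric] by (simp only:)
    with v_rank u_rank show ?thesis by linarith
  next
    case True
    then have empty: "{j \<in> {0..<length X}. u < X ! j \<and> X ! j < v} = {}"
      by auto
    show ?thesis
      unfolding empty using \<open>0 \<le> D\<close> by simp
  qed
next
  have "card {j \<in> {0..<n}. X ! j < u} \<le> card {j \<in> {0..<n}. X ! j < v}"
    using \<open>u \<le> v\<close> by (auto intro!: card_mono)
  moreover assume "k \<le> card {j \<in> {0..<length X}. X ! j < u}"
  ultimately show "real (card {j \<in> {0..<length X}. X ! j < u}) \<le> 4 * D"
    using left v_rank unfolding n_def by fastforce
next
  have "card {j \<in> {0..<n}. v < X ! j} \<le> card {j \<in> {0..<n}. u < X ! j}"
    using \<open>u \<le> v\<close> by (auto intro!: card_mono)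
  moreover assume "length X - card {j \<in> {0..<length X}. v < X ! j} < k"
  ultimately show "real (card {j \<in> {0..<length X}. v < X ! j}) \<le> 4 * D"
    using right u_rank unfolding n_def by fastforce
qed (use k \<open>0 \<le> \<gamma>P\<close> \<open>0 \<le> D\<close> in \<open>simp_all add: n_def\<close>)

lemma select_cost_le_of_pivot_ranks:
  fixes X :: "'a::linorder list" and \<alpha> \<beta> \<gamma>P D :: real and k :: nat and I :: "nat set"
  defines "n \<equiv> length X" and "u \<equiv> pivot_u \<alpha> \<beta> X k I" and "v \<equiv> pivot_v \<alpha> \<beta> X k I"
  assumes cR: "\<And>xs i. 1 \<le> i \<Longrightarrow> i \<le> length xs \<Longrightarrow> real (costR xs i) \<le> \<gamma>P * real (length xs)"
    and "0 \<le> \<gamma>P" "0 \<le> D" and I: "I \<subseteq> {0..<n}"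
    and idx: "1 \<le> idx_u \<alpha> \<beta> n k" "idx_u \<alpha> \<beta> n k \<le> idx_v \<alpha> \<beta> n k" "idx_v \<alpha> \<beta> n k \<le> card I"
    and k: "1 \<le> k" "k \<le> n"
    and v_rank: "card {j \<in> {0..<n}. X ! j < v} < k + 2 * D"
    and u_rank: "card {j \<in> {0..<n}. u < X ! j} \<le> real n - k + 2 * D"
    and left: "k \<le> card {j \<in> {0..<n}. X ! j < u} \<Longrightarrow> k \<le> D"
    and right: "n - card {j \<in> {0..<n}. v < X ! j} < k \<Longrightarrow> real n - k < D"
  shows "real (select_cost costR \<alpha> \<beta> X k I)
       \<le> n + min k (n - k) + (2 * \<gamma>P - 1) * card I + (4 * \<gamma>P + 2) * D"
proof -
  have "card I \<le> n"
    using I by (rule order.trans[OF card_mono[of "{0..<n}"], rotated]) auto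
  have "length (sample_list X I) = card I"
    using I by (simp add: sample_list_def finite_subset)
  then have "u \<le> v"
    using idx unfolding u_def v_def pivot_u_def pivot_v_def n_def by (intro sorted_nth_mono) auto
  have "real (if u = v then 0 else if real k < real n / 2
      then card {j \<in> {0..<n}. X ! j < v} else card {j \<in> {0..<n}. u < X ! j}) \<le> min k (n - k) + 2 * D"
    using v_rank u_rank k \<open>0 \<le> D\<close> by (auto simp: min_def of_nat_diff)
  moreover have "real (final_cost costR X k u v) \<le> \<gamma>P * (4 * D)"
    using final_cost_le_of_ranks[where costR = costR, OF cR \<open>0 \<le> \<gamma>P\<close> \<open>0 \<le> D\<close> \<open>u \<le> v\<close>] assms
    unfolding n_def by blast
  moreover have "real (select_cost costR \<alpha> \<beta> X k I) \<le> 2 * \<gamma>P * card I + real (n - card I)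
     + real (if u = v then 0 else if real k < real n / 2
             then card {j \<in> {0..<n}. X ! j < v} else card {j \<in> {0..<n}. u < X ! j})
     + real (final_cost costR X k u v)"
    unfolding u_def v_def n_def
    by (rule select_cost_le[OF cR I[unfolded n_def] idx(1)[unfolded n_def]])
      (use idx in \<open>simp_all add: n_def\<close>)
  ultimately have "real (select_cost costR \<alpha> \<beta> X k I)
      \<le> 2 * \<gamma>P * card I + real (n - card I) + (min k (n - k) + 2 * D) + \<gamma>P * (4 * D)"
    by linarith
  also have "\<dots> = n + min k (n - k) + (2 * \<gamma>P - 1) * card I + (4 * \<gamma>P + 2) * D"
    using \<open>card I \<le> n\<close> by (simp add: of_nat_diff algebra_simps)
  finally show ?thesis .
qed

section \<open>Growth of \<open>fS\<close>\<close>

lemma fS_pos: "2 \<le> n \<Longrightarrow> 0 < fS n"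
  unfolding fS_def by simp

lemma fS_cube:
  assumes "2 \<le> n"
  shows "fS n ^ 3 = real n ^ 2 * ln n"
proof -
  have "0 < ln (real n)" "real n \<noteq> 0"
    using assms by simp_all
  then have "fS n ^ 3 = real n powr 2 * ln n powr 1"
    unfolding fS_def by (simp add: power_mult_distrib powr_power)
  also have "\<dots> = real n ^ 2 * ln n"
    using \<open>0 < ln (real n)\<close> by simp
  finally show ?thesis .
qed

lemma fS_mono:
  assumes "m \<le> n" "2 \<le> m"
  shows "fS m \<le> fS n"
  unfolding fS_def using assms by (intro mult_mono powr_mono2) auto

lemma one_le_ln: "3 \<le> n \<Longrightarrow> 1 \<le> ln (real n)"
  using exp_le by (subst ln_ge_iff) auto

lemma le_two_fS:
  assumes "3 \<le> n" "n \<le> 8"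
  shows "real n \<le> 2 * fS n"
proof -
  have "real n powr (1/3) \<le> ((2::real) powr 3) powr (1/3)"
    using assms by (intro powr_mono2) auto
  also have "\<dots> = 2"
    by (simp add: powr_powr)
  finally have "real n powr (1/3) \<le> 2" .
  moreover have "1 \<le> ln (real n) powr (1/3)"
    using one_le_ln[OF assms(1)] by (intro ge_one_powr_ge_zero) auto
  ultimately have "real n powr (1/3) \<le> 2 * ln (real n) powr (1/3)"
    by linarith
  from mult_left_mono[OF this, of "real n powr (2/3)"]
  have "real n powr (2/3) * real n powr (1/3) \<le> 2 * fS n"
    by (simp add: fS_def mult_ac)
  then show ?thesis
    using assms by (simp flip: powr_add)
qed

lemma powr_two_thirds_le_fS:
  assumes "9 \<le> n"
  shows "6/5 * real n powr (2/3) \<le> fS n"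
proof -
  have "ln 9 \<le> ln (real n)"
    using assms by simp
  then have "2 * ln 3 \<le> ln (real n)"
    using ln_mult[of 3 3] by simp
  then have "2 \<le> ln (real n)"
    using one_le_ln[of 3] by simp
  have "(6/5::real) = ((6/5) powr 3) powr (1/3)"
    by (subst powr_powr) simp
  also have "\<dots> \<le> ln (real n) powr (1/3)"
    using \<open>2 \<le> ln (real n)\<close> by (intro powr_mono2) (auto simp: power3_eq_cube)
  finally have "6/5 \<le> ln (real n) powr (1/3)" .
  from mult_right_mono[OF this, of "real n powr (2/3)"] show ?thesis
    unfolding fS_def by (simp add: mult.commute)
qed

lemma bad_sample_term_le_fS:
  fixes \<gamma>P \<beta> q :: real
  assumes "3 \<le> n" "2 \<le> \<gamma>P" "1/6 \<le> \<beta>" "0 \<le> q" "q \<le> 1" "q \<le> 4 * real n powr (-2 * \<beta>)"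
  shows "(\<gamma>P + 1) * n * q \<le> (4 * \<gamma>P + 2) * fS n"
proof (cases "n \<le> 8")
  case True
  have "(\<gamma>P + 1) * n * q \<le> (\<gamma>P + 1) * n"
    using assms by (simp add: mult_left_le)
  also have "\<dots> \<le> (\<gamma>P + 1) * (2 * fS n)"
    using le_two_fS[OF assms(1) True] assms by (intro mult_left_mono) auto
  also have "\<dots> = (2 * \<gamma>P + 2) * fS n"
    by (simp add: algebra_simps)
  also have "\<dots> \<le> (4 * \<gamma>P + 2) * fS n"
    using fS_pos[of n] assms by (intro mult_right_mono) auto
  finally show ?thesis .
next
  case False
  have "real n powr (-2 * \<beta>) \<le> real n powr (- (1/3))"
    using assms by (intro powr_mono) auto
  with assms have "q \<le> 4 * real n powr (- (1/3))"
    by linarith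
  then have "(\<gamma>P + 1) * n * q \<le> (\<gamma>P + 1) * n * (4 * real n powr (- (1/3)))"
    using assms by (intro mult_left_mono) auto
  also have "\<dots> = (\<gamma>P + 1) * (4 * (real n * real n powr (- (1/3))))"
    by (simp only: mult_ac)
  also have "real n * real n powr (- (1/3)) = real n powr (2/3)"
  proof -
    have "real n powr 1 * real n powr (- (1/3)) = real n powr (2/3)"
      using assms by (simp only: powr_add[symmetric]) simp
    then show ?thesis
      using assms by simp
  qed
  also have "(\<gamma>P + 1) * (4 * real n powr (2/3)) = (4 * \<gamma>P + 4) * real n powr (2/3)"
    by (simp add: algebra_simps)
  also have "\<dots> \<le> ((4 * \<gamma>P + 2) * (6/5)) * real n powr (2/3)"
    using assms by (intro mult_right_mono) auto
  also have "\<dots> \<le> (4 * \<gamma>P + 2) * fS n"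
    using powr_two_thirds_le_fS[of n] False assms by (subst mult.assoc, intro mult_left_mono) auto
  finally show ?thesis .
qed

section \<open>Good and bad samples\<close>

lemma prob_le_and_expectation_le_of_good:
  fixes p :: "'b pmf" and c :: "'b \<Rightarrow> real" and B W :: real
  assumes fin: "finite (set_pmf p)" and "0 \<le> W"
    and good: "\<And>x. x \<in> set_pmf p \<Longrightarrow> G x \<Longrightarrow> c x \<le> B"
    and bad: "\<And>x. x \<in> set_pmf p \<Longrightarrow> c x \<le> B + W"
  shows "measure_pmf.prob p {x. c x \<le> B} \<ge> 1 - measure_pmf.prob p {x. \<not> G x}"
    and "measure_pmf.expectation p c \<le> B + W * measure_pmf.prob p {x. \<not> G x}"
proof -
  have "measure_pmf.prob p {x. G x} = measure_pmf.prob p ({x. G x} \<inter> set_pmf p)"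
    by (simp add: measure_Int_set_pmf)
  also have "\<dots> \<le> measure_pmf.prob p {x. c x \<le> B}"
    using good by (intro measure_pmf.finite_measure_mono) auto
  finally show "measure_pmf.prob p {x. c x \<le> B} \<ge> 1 - measure_pmf.prob p {x. \<not> G x}"
    using measure_pmf.prob_compl[of "{x. G x}" p]
    by (simp add: Compl_eq_Diff_UNIV[symmetric] Collect_neg_eq)
  have "measure_pmf.expectation p c \<le> measure_pmf.expectation p (\<lambda>x. B + W * indicator {x. \<not> G x} x)"
    using fin good bad \<open>0 \<le> W\<close>
    by (intro integral_mono_AE)
      (auto simp: integrable_measure_pmf_finite AE_measure_pmf_iff split: split_indicator)
  also have "\<dots> = B + W * measure_pmf.prob p {x. \<not> G x}"
    using fin by (simp add: integrable_measure_pmf_finite)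
  finally show "measure_pmf.expectation p c \<le> B + W * measure_pmf.prob p {x. \<not> G x}" .
qed

locale select_instance =
  fixes \<alpha> \<beta> :: real and X :: "'a::linorder list" and k :: nat
  assumes \<alpha>_pos: "0 < \<alpha>" and \<beta>_pos: "0 < \<beta>"
    and k_ge_1: "1 \<le> k" and k_le_length: "k \<le> length X"
    and sampsz_less: "sampsz \<alpha> (length X) < length X - 1"
begin

abbreviation n where "n \<equiv> length X"
abbreviation s where "s \<equiv> sampsz \<alpha> n"
abbreviation g where "g \<equiv> gapS \<alpha> \<beta> n"
abbreviation iu where "iu \<equiv> idx_u \<alpha> \<beta> n k"
abbreviation iv where "iv \<equiv> idx_v \<alpha> \<beta> n k"

text \<open>\<open>r\<close> is the sample rank corresponding to the target rank \<open>k\<close>, and \<open>\<Delta>\<close> is the half-width \<open>g\<close>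
  of the pivot window in the sample, measured in ranks of the whole input.\<close>

abbreviation r where "r \<equiv> real k * real s / real n"
abbreviation \<Delta> where "\<Delta> \<equiv> g * real n / real s"

lemma samples_eq: "samples n s = {I. I \<subseteq> {0..<n} \<and> card I = s}"
  by (simp add: samples_def)

lemma mem_samplesD:
  assumes "I \<in> samples n s"
  shows "I \<subseteq> {0..<n}" "card I = s" "finite I"
  using assms by (auto simp: samples_eq intro: finite_subset)

lemma finite_samples: "finite (samples n s)"
  unfolding samples_eq by (auto intro: finite_subset[of _ "Pow {0..<n}"])

lemma set_pmf_samples: "set_pmf (pmf_of_set (samples n s)) = samples n s"
proof -
  have "card (samples n s) = n choose s"
    unfolding samples_eq using n_subsets[of "{0..<n}" s] by simp
  moreover have "0 < n choose s"
    using sampsz_less by simp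
  ultimately have "samples n s \<noteq> {}"
    by (metis card.empty less_irrefl)
  then show ?thesis
    using finite_samples by simp
qed

lemma two_le_n: "2 \<le> n"
  using sampsz_less by linarith

lemma \<alpha>_fS_pos: "0 < \<alpha> * fS n"
  using \<alpha>_pos fS_pos[OF two_le_n] by simp

lemma sampsz_eq: "s = nat \<lceil>\<alpha> * fS n\<rceil>"
  using sampsz_less by (simp add: sampsz_def)

lemma one_le_sampsz: "1 \<le> s"
  using \<alpha>_fS_pos unfolding sampsz_eq by linarith

lemma three_le_n: "3 \<le> n"
  using one_le_sampsz sampsz_less by linarith

lemma sampsz_bounds: "\<alpha> * fS n \<le> s" "s < \<alpha> * fS n + 1"
  using \<alpha>_fS_pos unfolding sampsz_eq by linarith+

lemma n_s_nonzero: "real n \<noteq> 0" "real s \<noteq> 0"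
  using one_le_sampsz three_le_n by auto

lemma ln_n_pos: "0 < ln n"
  using three_le_n by (intro ln_gt_zero) simp

lemma gap_squared: "g\<^sup>2 = \<beta> * s * ln n"
  using \<beta>_pos ln_n_pos by (simp add: gapS_def)

lemma gap_pos: "0 < g"
  using \<beta>_pos one_le_sampsz ln_n_pos by (simp add: gapS_def)

lemma \<Delta>_pos: "0 < \<Delta>"
  using gap_pos one_le_sampsz three_le_n by (intro divide_pos_pos mult_pos_pos) auto

lemma scale_\<Delta>: "(x + c * \<Delta>) * s / n = x * s / n + c * g"
  using n_s_nonzero by (simp add: field_simps)

lemma \<Delta>_le: "\<Delta> \<le> sqrt (\<beta> / \<alpha>) * fS n"
proof -
  have F: "0 < fS n"
    using three_le_n by (intro fS_pos) simp
  have "\<Delta>\<^sup>2 = g\<^sup>2 * real n ^ 2 / real s ^ 2"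
    by (simp add: power_divide power_mult_distrib)
  also have "\<dots> = real s * (\<beta> * (real n ^ 2 * ln n)) / (real s * real s)"
    unfolding gap_squared power2_eq_square[of "real s"] by (simp add: mult_ac)
  also have "\<dots> = \<beta> * fS n ^ 3 / s"
    using one_le_sampsz three_le_n by (simp add: fS_cube)
  also have "\<dots> \<le> \<beta> * fS n ^ 3 / (\<alpha> * fS n)"
  proof (rule divide_left_mono[OF sampsz_bounds(1)])
    show "0 \<le> \<beta> * fS n ^ 3"
      using \<beta>_pos F by simp
    show "0 < real s * (\<alpha> * fS n)"
      using one_le_sampsz \<alpha>_pos F by simp
  qed
  also have "\<dots> = \<beta> / \<alpha> * fS n ^ 2"
    using \<alpha>_pos F by (simp add: power2_eq_square power3_eq_cube)
  also have "\<dots> = (sqrt (\<beta> / \<alpha>) * fS n)\<^sup>2"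
    using \<alpha>_pos \<beta>_pos by (simp add: power_mult_distrib)
  finally have "\<Delta>\<^sup>2 \<le> (sqrt (\<beta> / \<alpha>) * fS n)\<^sup>2" .
  moreover have "0 \<le> sqrt (\<beta> / \<alpha>) * fS n"
    using \<alpha>_pos \<beta>_pos F by simp
  ultimately show ?thesis
    by (rule power2_le_imp_le)
qed

lemma idx_u_eq: "iu = max (nat \<lceil>r - g\<rceil>) 1"
  by (simp add: idx_u_def)

lemma idx_v_eq: "iv = min (nat \<lceil>r + g\<rceil>) s"
  by (simp add: idx_v_def)

lemma r_bounds: "0 < r" "r \<le> s"
proof -
  show "0 < r"
    using k_ge_1 one_le_sampsz three_le_n by (intro divide_pos_pos mult_pos_pos) auto
  have "real k * s \<le> real n * s"
    using k_le_length by (intro mult_right_mono) auto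
  then show "r \<le> s"
    using three_le_n by (simp add: divide_le_eq mult.commute)
qed

lemma idx_bounds: "1 \<le> iu" "iu \<le> iv" "iv \<le> s"
proof -
  define a where "a = \<lceil>r - g\<rceil>"
  define b where "b = \<lceil>r + g\<rceil>"
  have "a \<le> b"
    unfolding a_def b_def using gap_pos by (intro ceiling_mono) simp
  moreover have "a \<le> int s"
    unfolding a_def ceiling_le_iff using r_bounds gap_pos by simp
  moreover have "0 < b"
    unfolding b_def using r_bounds gap_pos by simp
  ultimately have "nat a \<le> nat b" "nat a \<le> s" "1 \<le> nat b"
    by auto
  then show "1 \<le> iu" "iu \<le> iv" "iv \<le> s"
    unfolding idx_u_eq idx_v_eq a_def[symmetric] b_def[symmetric] using one_le_sampsz by auto
qed

lemma idx_u_ge: "r - g \<le> iu"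
  unfolding idx_u_eq by linarith

lemma idx_u_less: "1 \<le> \<lceil>r - g\<rceil> \<Longrightarrow> iu < r - g + 1"
  unfolding idx_u_eq by linarith

lemma idx_v_less: "iv < r + g + 1"
  using r_bounds gap_pos unfolding idx_v_eq by linarith

lemma idx_v_ge: "\<lceil>r + g\<rceil> \<le> int s \<Longrightarrow> r + g \<le> iv"
  unfolding idx_v_eq by linarith

abbreviation rank_hi where "rank_hi \<equiv> min (nat \<lceil>real k + 2 * \<Delta>\<rceil>) n"
abbreviation rank_lo where "rank_lo \<equiv> nat (\<lceil>real k - 2 * \<Delta>\<rceil> - 1)"

lemma rank_lo_le: "rank_lo \<le> n"
proof -
  have "\<lceil>real k - 2 * \<Delta>\<rceil> \<le> int k"
    using \<Delta>_pos by (simp add: ceiling_le_iff)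
  then show ?thesis
    using k_le_length by linarith
qed

text \<open>A sample is good if none of four hypergeometric tail events occurs, at the ranks
  \<open>rank_hi \<approx> k + 2\<Delta>\<close>, \<open>rank_lo \<approx> k - 2\<Delta>\<close>, \<open>k\<close> and \<open>k - 1\<close>. Then the ranks of both pivots lie
  within \<open>2\<Delta>\<close> of \<open>k\<close>, and the pivots bracket the target unless the window
  \<open>[r - g, r + g]\<close> was clipped to \<open>[1, s]\<close>.\<close>

definition good_sample :: "nat set \<Rightarrow> bool" where
  "good_sample I \<longleftrightarrow>
     real rank_hi * s / n - g < card (I \<inter> rank_set X rank_hi) \<and>
     card (I \<inter> rank_set X rank_lo) < real rank_lo * s / n + g \<and>
     real k * s / n - g < card (I \<inter> rank_set X k) \<and>
     card (I \<inter> rank_set X (k - 1)) < real (k - 1) * s / n + g"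

lemma exp_gap: "exp (-2 * g\<^sup>2 / s) = real n powr (-2 * \<beta>)"
proof -
  have "X \<noteq> []"
    using three_le_n by auto
  then show ?thesis
    using one_le_sampsz by (simp add: gap_squared powr_def)
qed

lemma prob_rank_set_tails:
  assumes "m \<le> n"
  shows "measure_pmf.prob (pmf_of_set (samples n s))
           {I. card (I \<inter> rank_set X m) \<le> real m * s / n - g} \<le> real n powr (-2 * \<beta>)"
    and "measure_pmf.prob (pmf_of_set (samples n s))
           {I. real m * s / n + g \<le> card (I \<inter> rank_set X m)} \<le> real n powr (-2 * \<beta>)"
proof -
  have "card ({0..<n} \<inter> rank_set X m) = m"
    using assms by (simp add: Int_absorb1 rank_set_subset card_rank_set)
  moreover have "s \<le> card {0..<n}" "0 < s"
    using sampsz_less one_le_sampsz by simp_all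
  ultimately show "measure_pmf.prob (pmf_of_set (samples n s))
           {I. card (I \<inter> rank_set X m) \<le> real m * s / n - g} \<le> real n powr (-2 * \<beta>)"
    and "measure_pmf.prob (pmf_of_set (samples n s))
           {I. real m * s / n + g \<le> card (I \<inter> rank_set X m)} \<le> real n powr (-2 * \<beta>)"
    using hypergeometric_lower_tail[of "{0..<n}" s g "rank_set X m"]
      hypergeometric_upper_tail[of "{0..<n}" s g "rank_set X m"] gap_pos
    unfolding samples_eq exp_gap by (simp_all add: mult.commute)
qed

lemma prob_not_good_sample:
  "measure_pmf.prob (pmf_of_set (samples n s)) {I. \<not> good_sample I} \<le> 4 * real n powr (-2 * \<beta>)"
proof -
  let ?P = "measure_pmf.prob (pmf_of_set (samples n s))"
  define E1 where "E1 = {I. card (I \<inter> rank_set X rank_hi) \<le> real rank_hi * s / n - g}"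
  define E2 where "E2 = {I. real rank_lo * s / n + g \<le> card (I \<inter> rank_set X rank_lo)}"
  define E3 where "E3 = {I. card (I \<inter> rank_set X k) \<le> real k * s / n - g}"
  define E4 where "E4 = {I. real (k - 1) * s / n + g \<le> card (I \<inter> rank_set X (k - 1))}"
  have union: "?P (A \<union> B) \<le> ?P A + ?P B" for A B
    by (rule measure_Un_le) simp_all
  have bad_eq: "{I. \<not> good_sample I} = E1 \<union> E2 \<union> E3 \<union> E4"
    unfolding good_sample_def E1_def E2_def E3_def E4_def by auto
  have "?P E1 \<le> real n powr (-2 * \<beta>)" "?P E2 \<le> real n powr (-2 * \<beta>)"
    "?P E3 \<le> real n powr (-2 * \<beta>)" "?P E4 \<le> real n powr (-2 * \<beta>)"
    using prob_rank_set_tails(1)[of rank_hi] prob_rank_set_tails(2)[of rank_lo]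
      prob_rank_set_tails(1)[of k] prob_rank_set_tails(2)[of "k - 1"] k_le_length rank_lo_le
    unfolding E1_def E2_def E3_def E4_def by simp_all
  then show ?thesis
    unfolding bad_eq using union[of "E1 \<union> E2 \<union> E3" E4] union[of "E1 \<union> E2" E3] union[of E1 E2]
    by linarith
qed

lemma pivot_sample_ranks:
  assumes I: "I \<in> samples n s"
  shows "card {j \<in> I. X ! j < pivot_v \<alpha> \<beta> X k I} \<le> iv - 1"
    and "card {j \<in> I. pivot_v \<alpha> \<beta> X k I < X ! j} \<le> s - iv"
    and "card {j \<in> I. X ! j < pivot_u \<alpha> \<beta> X k I} \<le> iu - 1"
    and "card {j \<in> I. pivot_u \<alpha> \<beta> X k I < X ! j} \<le> s - iu"
proof -
  note I = mem_samplesD[OF I]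
  have "1 \<le> iv" "iv \<le> card I" "iu \<le> card I"
    using idx_bounds I(2) by simp_all
  then show "card {j \<in> I. X ! j < pivot_v \<alpha> \<beta> X k I} \<le> iv - 1"
    and "card {j \<in> I. pivot_v \<alpha> \<beta> X k I < X ! j} \<le> s - iv"
    and "card {j \<in> I. X ! j < pivot_u \<alpha> \<beta> X k I} \<le> iu - 1"
    and "card {j \<in> I. pivot_u \<alpha> \<beta> X k I < X ! j} \<le> s - iu"
    using card_sample_sort_nth[OF I(3)] idx_bounds(1) I(2) by (simp_all add: pivot_v_def pivot_u_def)
qed

lemma card_less_pivot_v:
  assumes I: "I \<in> samples n s" and good: "good_sample I"
  shows "card {j \<in> {0..<n}. X ! j < pivot_v \<alpha> \<beta> X k I} < real k + 2 * \<Delta>"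
proof -
  have "iv \<le> card (I \<inter> rank_set X rank_hi)"
  proof (cases "rank_hi = n")
    case True
    then show ?thesis
      using mem_samplesD[OF I] idx_bounds by (simp add: rank_set_length Int_absorb2)
  next
    case False
    then have "real k + 2 * \<Delta> \<le> rank_hi"
      by linarith
    then have "(real k + 2 * \<Delta>) * s / n \<le> real rank_hi * s / n"
      by (intro divide_right_mono mult_right_mono) auto
    then have "r + 2 * g \<le> real rank_hi * s / n"
      unfolding scale_\<Delta> .
    then show ?thesis
      using good idx_v_less unfolding good_sample_def by linarith
  qed
  then have "card {j \<in> I. X ! j < pivot_v \<alpha> \<beta> X k I} < card (I \<inter> rank_set X rank_hi)"
    using pivot_sample_ranks(1)[OF I] idx_bounds by linarith
  from card_less_lt_rank_if_sample_hits[OF _ mem_samplesD(3)[OF I] this]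
  have "card {j \<in> {0..<n}. X ! j < pivot_v \<alpha> \<beta> X k I} < rank_hi"
    by simp
  then show ?thesis
    by linarith
qed

lemma pivot_v_left_of_target:
  assumes I: "I \<in> samples n s" and good: "good_sample I"
    and right: "n - card {j \<in> {0..<n}. pivot_v \<alpha> \<beta> X k I < X ! j} < k"
  shows "real n - k < \<Delta>"
proof (cases "\<lceil>r + g\<rceil> \<le> int s")
  case True
  note I = mem_samplesD[OF I]
  have "real (k - 1) * s / n \<le> r"
    using three_le_n by (intro divide_right_mono mult_right_mono) auto
  then have "card (I \<inter> rank_set X (k - 1)) < iv"
    using good idx_v_ge[OF True] unfolding good_sample_def by linarith
  then have "card {j \<in> I. pivot_v \<alpha> \<beta> X k I < X ! j} < card (I - rank_set X (k - 1))"
    using pivot_sample_ranks(2)[OF assms(1)] idx_bounds I by (simp add: card_Diff_subset_Int)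
  from card_greater_lt_rank_if_sample_hits[OF _ I(1) this]
  have "card {j \<in> {0..<n}. pivot_v \<alpha> \<beta> X k I < X ! j} < n - (k - 1)"
    using k_le_length by simp
  with right k_ge_1 show ?thesis
    by linarith
next
  case False
  then have "real s - r < g"
    by linarith
  then have "(real s - r) * n / s < \<Delta>"
    using one_le_sampsz three_le_n by (intro divide_strict_right_mono mult_strict_right_mono) auto
  moreover have "(real s - r) * n / s = real n - k"
    using n_s_nonzero by (simp add: field_simps)
  ultimately show ?thesis
    by simp
qed

lemma card_greater_pivot_u:
  assumes I: "I \<in> samples n s" and good: "good_sample I"
  shows "card {j \<in> {0..<n}. pivot_u \<alpha> \<beta> X k I < X ! j} \<le> real n - k + 2 * \<Delta>"
proof -
  note I' = mem_samplesD[OF I]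
  have "card (I \<inter> rank_set X rank_lo) < iu"
  proof (cases "rank_lo = 0")
    case True
    then show ?thesis
      using idx_bounds by (simp add: rank_set_def)
  next
    case False
    then have "real rank_lo \<le> real k - 2 * \<Delta>"
      by linarith
    then have "real rank_lo * s / n \<le> (real k - 2 * \<Delta>) * s / n"
      by (intro divide_right_mono mult_right_mono) auto
    then have "real rank_lo * s / n \<le> r - 2 * g"
      using scale_\<Delta>[of k "-2"] by simp
    then show ?thesis
      using good idx_u_ge unfolding good_sample_def by linarith
  qed
  then have "card {j \<in> I. pivot_u \<alpha> \<beta> X k I < X ! j} < card (I - rank_set X rank_lo)"
    using pivot_sample_ranks(4)[OF I] idx_bounds I' by (simp add: card_Diff_subset_Int)
  from card_greater_lt_rank_if_sample_hits[OF _ I'(1) this]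
  have "card {j \<in> {0..<n}. pivot_u \<alpha> \<beta> X k I < X ! j} < n - rank_lo"
    using rank_lo_le by simp
  then show ?thesis
    using rank_lo_le by linarith
qed

lemma pivot_u_right_of_target:
  assumes I: "I \<in> samples n s" and good: "good_sample I"
    and left: "k \<le> card {j \<in> {0..<n}. X ! j < pivot_u \<alpha> \<beta> X k I}"
  shows "k \<le> \<Delta>"
proof (cases "1 \<le> \<lceil>r - g\<rceil>")
  case True
  then have "iu \<le> card (I \<inter> rank_set X k)"
    using good idx_u_less unfolding good_sample_def by linarith
  then have "card {j \<in> I. X ! j < pivot_u \<alpha> \<beta> X k I} < card (I \<inter> rank_set X k)"
    using pivot_sample_ranks(3)[OF I] idx_bounds by linarith
  from card_less_lt_rank_if_sample_hits[OF _ mem_samplesD(3)[OF I] this]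
  have "card {j \<in> {0..<n}. X ! j < pivot_u \<alpha> \<beta> X k I} < k"
    using k_le_length by simp
  with left show ?thesis
    by linarith
next
  case False
  then have "r \<le> g"
    by linarith
  then have "r * n / s \<le> \<Delta>"
    by (intro divide_right_mono mult_right_mono) auto
  moreover have "r * n / s = k"
    using n_s_nonzero by (simp add: field_simps)
  ultimately show ?thesis
    by simp
qed

lemma select_cost_le_good_sample:
  fixes \<gamma>P :: real and costR :: "'a list \<Rightarrow> nat \<Rightarrow> nat"
  assumes cR: "\<And>xs i. 1 \<le> i \<Longrightarrow> i \<le> length xs \<Longrightarrow> real (costR xs i) \<le> \<gamma>P * real (length xs)"
    and "0 \<le> \<gamma>P" and I: "I \<in> samples n s" and good: "good_sample I"
  shows "real (select_cost costR \<alpha> \<beta> X k I) \<le> n + min k (n - k) + (2 * \<gamma>P - 1) * s + (4 * \<gamma>P + 2) * \<Delta>"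
proof -
  have "idx_v \<alpha> \<beta> n k \<le> card I"
    using idx_bounds(3) mem_samplesD(2)[OF I] by simp
  from select_cost_le_of_pivot_ranks[where costR = costR, OF cR \<open>0 \<le> \<gamma>P\<close> less_imp_le[OF \<Delta>_pos]
      mem_samplesD(1)[OF I] idx_bounds(1,2) this k_ge_1 k_le_length
      card_less_pivot_v[OF I good] card_greater_pivot_u[OF I good]
      pivot_u_right_of_target[OF I good] pivot_v_left_of_target[OF I good]]
  show ?thesis
    using mem_samplesD(2)[OF I] by simp
qed

lemma select_cost_le_any_sample:
  fixes \<gamma>P :: real and costR :: "'a list \<Rightarrow> nat \<Rightarrow> nat"
  assumes cR: "\<And>xs i. 1 \<le> i \<Longrightarrow> i \<le> length xs \<Longrightarrow> real (costR xs i) \<le> \<gamma>P * real (length xs)"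
    and "0 \<le> \<gamma>P" and I: "I \<in> samples n s"
  shows "real (select_cost costR \<alpha> \<beta> X k I) \<le> (2 * \<gamma>P - 1) * s + (\<gamma>P + 2) * n"
proof -
  have "idx_u \<alpha> \<beta> n k \<le> card I" "idx_v \<alpha> \<beta> n k \<le> card I" "1 \<le> idx_v \<alpha> \<beta> n k"
    using idx_bounds mem_samplesD(2)[OF I] by simp_all
  from select_cost_le_worst_case[where costR = costR, OF cR \<open>0 \<le> \<gamma>P\<close> mem_samplesD(1)[OF I]
      idx_bounds(1) this(1) this(3) this(2) k_ge_1 k_le_length]
  show ?thesis
    using mem_samplesD(2)[OF I] by simp
qed

lemma gamma_hat_bound:
  fixes F \<gamma>P :: real
  assumes "0 < F" "F \<le> fS n" "1/2 \<le> \<gamma>P"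
  shows "(2 * \<gamma>P - 1) * s + (4 * \<gamma>P + 2) * \<Delta> \<le> gamma_hat \<alpha> \<beta> \<gamma>P F * fS n"
proof -
  have "1 \<le> fS n / F"
    using assms by simp
  then have "\<alpha> * fS n + 1 \<le> (\<alpha> + 1 / F) * fS n"
    by (simp add: algebra_simps)
  then have "real s \<le> (\<alpha> + 1 / F) * fS n"
    using sampsz_bounds(2) by linarith
  then have "(2 * \<gamma>P - 1) * s \<le> (2 * \<gamma>P - 1) * ((\<alpha> + 1 / F) * fS n)"
    using assms by (intro mult_left_mono) auto
  moreover have "(4 * \<gamma>P + 2) * \<Delta> \<le> (4 * \<gamma>P + 2) * (sqrt (\<beta> / \<alpha>) * fS n)"
    using \<Delta>_le assms by (intro mult_left_mono) auto
  ultimately show ?thesis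
    unfolding gamma_hat_def by (simp add: algebra_simps)
qed

lemma select_cost_le_gamma_hat:
  fixes \<gamma>P F :: real and costR :: "'a list \<Rightarrow> nat \<Rightarrow> nat"
  defines "B \<equiv> real n + real (min k (n - k)) + gamma_hat \<alpha> \<beta> \<gamma>P F * fS n"
  assumes cR: "\<And>xs i. 1 \<le> i \<Longrightarrow> i \<le> length xs \<Longrightarrow> real (costR xs i) \<le> \<gamma>P * real (length xs)"
    and "2 \<le> \<gamma>P" "0 < F" "F \<le> fS n" and I: "I \<in> samples n s"
  shows "good_sample I \<Longrightarrow> real (select_cost costR \<alpha> \<beta> X k I) \<le> B"
    and "real (select_cost costR \<alpha> \<beta> X k I) \<le> B + (\<gamma>P + 1) * n"
proof -
  have ghat: "(2 * \<gamma>P - 1) * s + (4 * \<gamma>P + 2) * \<Delta> \<le> gamma_hat \<alpha> \<beta> \<gamma>P F * fS n"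
    using gamma_hat_bound[of F \<gamma>P] assms by simp
  show "real (select_cost costR \<alpha> \<beta> X k I) \<le> B" if "good_sample I"
    using select_cost_le_good_sample[where costR = costR, OF cR _ I that] \<open>2 \<le> \<gamma>P\<close> ghat
    unfolding B_def by simp
  have "0 \<le> (4 * \<gamma>P + 2) * \<Delta>"
    using \<Delta>_pos \<open>2 \<le> \<gamma>P\<close> by (intro mult_nonneg_nonneg) auto
  with select_cost_le_any_sample[where costR = costR, OF cR _ I] \<open>2 \<le> \<gamma>P\<close> ghat
  show "real (select_cost costR \<alpha> \<beta> X k I) \<le> B + (\<gamma>P + 1) * n"
    unfolding B_def by (simp add: algebra_simps)
qed

lemma select_cost_bounds:
  fixes \<gamma>P F :: real and costR :: "'a list \<Rightarrow> nat \<Rightarrow> nat"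
  defines "p \<equiv> pmf_of_set (samples n s)"
    and "c \<equiv> \<lambda>I. real (select_cost costR \<alpha> \<beta> X k I)"
    and "B \<equiv> real n + real (min k (n - k)) + gamma_hat \<alpha> \<beta> \<gamma>P F * fS n"
  assumes cR: "\<And>xs i. 1 \<le> i \<Longrightarrow> i \<le> length xs \<Longrightarrow> real (costR xs i) \<le> \<gamma>P * real (length xs)"
    and "2 \<le> \<gamma>P" "0 < F" "F \<le> fS n"
  shows "measure_pmf.prob p {I. c I \<le> B} \<ge> 1 - 4 * real n powr (-2 * \<beta>)"
    and "1/6 \<le> \<beta> \<Longrightarrow> measure_pmf.expectation p c \<le> B + (4 * \<gamma>P + 2) * fS n"
proof -
  have fin: "finite (set_pmf p)"
    unfolding p_def set_pmf_samples by (rule finite_samples)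
  have W: "0 \<le> (\<gamma>P + 1) * n"
    using \<open>2 \<le> \<gamma>P\<close> by simp
  have good: "c I \<le> B" if "I \<in> set_pmf p" "good_sample I" for I
    using select_cost_le_gamma_hat(1)[where costR = costR, OF cR \<open>2 \<le> \<gamma>P\<close> \<open>0 < F\<close> \<open>F \<le> fS n\<close>] that
    unfolding p_def c_def B_def set_pmf_samples by simp
  have any: "c I \<le> B + (\<gamma>P + 1) * n" if "I \<in> set_pmf p" for I
    using select_cost_le_gamma_hat(2)[where costR = costR, OF cR \<open>2 \<le> \<gamma>P\<close> \<open>0 < F\<close> \<open>F \<le> fS n\<close>] that
    unfolding p_def c_def B_def set_pmf_samples by simp
  note bounds = prob_le_and_expectation_le_of_good[where G = good_sample and c = c, OF fin W good any]
  have bad: "measure_pmf.prob p {I. \<not> good_sample I} \<le> 4 * real n powr (-2 * \<beta>)"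
    using prob_not_good_sample unfolding p_def .
  show "measure_pmf.prob p {I. c I \<le> B} \<ge> 1 - 4 * real n powr (-2 * \<beta>)"
    using bounds(1) bad by simp
  assume "1/6 \<le> \<beta>"
  have "measure_pmf.expectation p c \<le> B + (\<gamma>P + 1) * n * measure_pmf.prob p {I. \<not> good_sample I}"
    using bounds(2) by (simp add: mult.assoc)
  also have "\<dots> \<le> B + (4 * \<gamma>P + 2) * fS n"
    using bad_sample_term_le_fS[OF three_le_n \<open>2 \<le> \<gamma>P\<close> \<open>1/6 \<le> \<beta>\<close> _ _ bad] by simp
  finally show "measure_pmf.expectation p c \<le> B + (4 * \<gamma>P + 2) * fS n" .
qed

end

theorem theorem5p1:
  fixes \<alpha> \<beta> \<gamma>P :: real and X :: "'a::linorder list" and k :: nat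
    and costR :: "'a list \<Rightarrow> nat \<Rightarrow> nat"
  defines "n \<equiv> length X"
  defines "p \<equiv> pmf_of_set (samples n (sampsz \<alpha> n))"
  defines "c \<equiv> (\<lambda>I. real (select_cost costR \<alpha> \<beta> X k I))"
  assumes "\<alpha> > 0" and "\<beta> > 0" and "\<gamma>P > 2"
    and "\<And>xs i. 1 \<le> i \<Longrightarrow> i \<le> length xs \<Longrightarrow> real (costR xs i) \<le> \<gamma>P * real (length xs)"
    and "1 \<le> k" and "k \<le> n"
    and "sampsz \<alpha> n < n - 1"
  shows "measure_pmf.prob p
           {I. c I \<le> real n + real (min k (n - k)) + gamma_hat \<alpha> \<beta> \<gamma>P (fS n) * fS n}
           \<ge> 1 - 4 * real n powr (-2 * \<beta>)
       \<and> measure_pmf.prob p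
           {I. c I \<le> real n + real (min k (n - k)) + gamma_hat \<alpha> \<beta> \<gamma>P (fS 3) * fS n}
           \<ge> 1 - 4 * real n powr (-2 * \<beta>)
       \<and> (\<beta> \<ge> 1/6 \<longrightarrow> measure_pmf.expectation p c
           \<le> real n + real (min k (n - k)) + (gamma_hat \<alpha> \<beta> \<gamma>P (fS n) + 4 * \<gamma>P + 2) * fS n)"
proof -
  note cR = \<open>\<And>xs i. 1 \<le> i \<Longrightarrow> i \<le> length xs \<Longrightarrow> real (costR xs i) \<le> \<gamma>P * real (length xs)\<close>
  have inst: "select_instance \<alpha> \<beta> X k"
    using assms unfolding n_def by unfold_locales simp_all
  have "2 \<le> \<gamma>P"
    using \<open>\<gamma>P > 2\<close> by simp
  have "3 \<le> n"
    using select_instance.three_le_n[OF inst] unfolding n_def .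
  then have "0 < fS 3" "fS 3 \<le> fS n" "0 < fS n"
    using fS_pos fS_mono[of 3 n] by simp_all
  show ?thesis
    using select_instance.select_cost_bounds[OF inst cR \<open>2 \<le> \<gamma>P\<close>, where F = "fS n"]
      select_instance.select_cost_bounds(1)[OF inst cR \<open>2 \<le> \<gamma>P\<close>, where F = "fS 3"]
      \<open>0 < fS 3\<close> \<open>fS 3 \<le> fS n\<close> \<open>0 < fS n\<close>
    unfolding p_def c_def n_def by (simp add: algebra_simps)
qed

end
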